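(* Let $\hat v\in\{0,1\}^{\mathcal T}$ be the indicator vector of a proper triple set. Then the optimal objective value of the linear program $\mathrm{D}(\hat v)$ lies in the interval $[-\eta,0]$, where $\eta=-\sum_{i=1}^m\min(0,\alpha_i)$ and $\mathrm{D}(\hat v)$ is: maximize $-\sum_{t\in\mathcal T}\big[(1-\hat v_t)(\lambda_{t,1}+\lambda_{t,2})+(2-\hat v_t)\lambda_{t,3}\big]-\sum_{J\in\mathcal N}\mu_J$ over $\lambda_{t,1},\lambda_{t,2},\lambda_{t,3}\ge0$ ($t\in\mathcal T$) and $\mu_J\ge 0$ ($J\in\mathcal N$), subject to, for every $J\in\mathcal N$, $\beta_J+\sum_{t:\mathsf{tail1}(t)=J}(-\lambda_{t,1}+\lambda_{t,3})+\sum_{t:\mathsf{tail2}(t)=J}(-\lambda_{t,2}+\lambda_{t,3})+\sum_{t:\mathsf{head}(t)=J}(\lambda_{t,1}+\lambda_{t,2}-\lambda_{t,3})+\mu_J\ge 0.$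
   Context: A multilinear program has data $n,m$, coefficients $\alpha_i\in\mathbb{R}$ and nonempty index sets $J_i\subseteq[n]$. Let $\mathcal N=\bigcup_i\{J:\emptyset\ne J\subseteq J_i\}$ and $\beta_J=\sum_{i:J_i=J}\alpha_i$ for $J\in\mathcal N$. A triple is $t=(J,J',J'')$ with $J''\in\mathcal N$, $|J''|\ge2$, $J,J'$ nonempty, disjoint, $J\cup J'=J''$, listed with $J,J'$ in lexicographic order; $\mathsf{tail1}(t)=J$, $\mathsf{tail2}(t)=J'$, $\mathsf{head}(t)=J''$; $\mathcal T$ is the set of all triples. A proper triple set is a set $T\subseteq\mathcal T$ containing a subset $T'$ such that (1) every $J_i$ with $|J_i|>1$ is the head of some triple in $T'$, and (2) whenever a set $J$ with $|J|>1$ is the first or second element of a triple in $T'$, $J$ is the head of a different triple in $T'$; its indicator vector has $\hat v_t=1$ iff $t\in T$. $\mathrm{D}(\hat v)$ is the LP dual of the McCormick relaxation $\min\sum_J\beta_Jy_J$ over $y\in[0,1]^{\mathcal N}$ subject to $y_{J''}-y_J\le1-\hat v_t$, $y_{J''}-y_{J'}\le1-\hat v_t$, $y_J+y_{J'}-y_{J''}\le2-\hat v_t$ for all $t=(J,J',J'')\in\mathcal T$ (with $\lambda_{t,1},\lambda_{t,2},\lambda_{t,3}$ the multipliers of these three inequalities and $\mu_J$ that of $y_J\le1$). *)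

theory Defs
  imports Complex_Main
begin

type_synonym triple = "nat set \<times> nat set \<times> nat set"

definition tail1 :: "triple \<Rightarrow> nat set" where "tail1 t = fst t"
definition tail2 :: "triple \<Rightarrow> nat set" where "tail2 t = fst (snd t)"
definition head :: "triple \<Rightarrow> nat set" where "head t = snd (snd t)"

definition NN :: "nat \<Rightarrow> (nat \<Rightarrow> nat set) \<Rightarrow> nat set set" where
  "NN m Js = (\<Union>i\<in>{1..m}. {J. J \<noteq> {} \<and> J \<subseteq> Js i})"

definition beta :: "nat \<Rightarrow> (nat \<Rightarrow> real) \<Rightarrow> (nat \<Rightarrow> nat set) \<Rightarrow> nat set \<Rightarrow> real" where
  "beta m alpha Js J = (\<Sum>i\<in>{i\<in>{1..m}. Js i = J}. alpha i)"

definition lex_set_less :: "nat set \<Rightarrow> nat set \<Rightarrow> bool" where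
  "lex_set_less A B = lexordp (<) (sorted_list_of_set A) (sorted_list_of_set B)"

definition triples :: "nat \<Rightarrow> (nat \<Rightarrow> nat set) \<Rightarrow> triple set" where
  "triples m Js = {(A, B, C). C \<in> NN m Js \<and> card C \<ge> 2 \<and> A \<noteq> {} \<and> B \<noteq> {}
      \<and> A \<inter> B = {} \<and> A \<union> B = C \<and> lex_set_less A B}"

definition proper_triple_set :: "nat \<Rightarrow> (nat \<Rightarrow> nat set) \<Rightarrow> triple set \<Rightarrow> bool" where
  "proper_triple_set m Js T \<longleftrightarrow> T \<subseteq> triples m Js \<and>
     (\<exists>T' \<subseteq> T.
        (\<forall>i\<in>{1..m}. card (Js i) > 1 \<longrightarrow> (\<exists>t\<in>T'. head t = Js i)) \<and>
        (\<forall>t\<in>T'. \<forall>K\<in>{tail1 t, tail2 t}. card K > 1 \<longrightarrow>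
            (\<exists>t'\<in>T'. t' \<noteq> t \<and> head t' = K)))"

definition indicator_vec :: "triple set \<Rightarrow> triple \<Rightarrow> real" where
  "indicator_vec T t = (if t \<in> T then 1 else 0)"

definition dual_feasible ::
  "nat \<Rightarrow> (nat \<Rightarrow> real) \<Rightarrow> (nat \<Rightarrow> nat set) \<Rightarrow>
   (triple \<Rightarrow> real) \<Rightarrow> (triple \<Rightarrow> real) \<Rightarrow> (triple \<Rightarrow> real) \<Rightarrow> (nat set \<Rightarrow> real) \<Rightarrow> bool" where
  "dual_feasible m alpha Js l1 l2 l3 mu \<longleftrightarrow>
     (\<forall>t\<in>triples m Js. l1 t \<ge> 0 \<and> l2 t \<ge> 0 \<and> l3 t \<ge> 0) \<and>
     (\<forall>J\<in>NN m Js. mu J \<ge> 0) \<and>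
     (\<forall>J\<in>NN m Js.
        beta m alpha Js J
        + (\<Sum>t\<in>{t\<in>triples m Js. tail1 t = J}. - l1 t + l3 t)
        + (\<Sum>t\<in>{t\<in>triples m Js. tail2 t = J}. - l2 t + l3 t)
        + (\<Sum>t\<in>{t\<in>triples m Js. head t = J}. l1 t + l2 t - l3 t)
        + mu J \<ge> 0)"

definition dual_obj ::
  "nat \<Rightarrow> (nat \<Rightarrow> nat set) \<Rightarrow> (triple \<Rightarrow> real) \<Rightarrow>
   (triple \<Rightarrow> real) \<Rightarrow> (triple \<Rightarrow> real) \<Rightarrow> (triple \<Rightarrow> real) \<Rightarrow> (nat set \<Rightarrow> real) \<Rightarrow> real" where
  "dual_obj m Js v l1 l2 l3 mu =
     - (\<Sum>t\<in>triples m Js. (1 - v t) * (l1 t + l2 t) + (2 - v t) * l3 t)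
     - (\<Sum>J\<in>NN m Js. mu J)"

definition dual_opt_value ::
  "nat \<Rightarrow> (nat \<Rightarrow> real) \<Rightarrow> (nat \<Rightarrow> nat set) \<Rightarrow> (triple \<Rightarrow> real) \<Rightarrow> real \<Rightarrow> bool" where
  "dual_opt_value m alpha Js v val \<longleftrightarrow>
     (\<exists>l1 l2 l3 mu. dual_feasible m alpha Js l1 l2 l3 mu \<and> dual_obj m Js v l1 l2 l3 mu = val) \<and>
     (\<forall>l1 l2 l3 mu. dual_feasible m alpha Js l1 l2 l3 mu \<longrightarrow> dual_obj m Js v l1 l2 l3 mu \<le> val)"

end

theory Submission
  imports Defs "HOL-Analysis.Analysis"
begin

(*
  The point with all lambda = 0 and mu_J = max 0 (-beta_J) is dual feasible with objective
  -(sum_J max 0 (-beta_J)) >= -eta, and every feasible objective value is <= 0 because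
  0 <= v <= 1 (weak duality against y = 0). What remains is that the maximum is attained.
  Above a fixed level the objective bounds sum_t lambda_t3 and sum_J mu_J; summing the
  constraints with the weights n - |J|, which drop by at least one from either tail of a
  triple to its head, then bounds sum_t (lambda_t1 + lambda_t2). So the feasible points above
  the level that vanish outside the triples and N lie in a compact box of the product
  topology, where the continuous objective attains its maximum.
*)

lemma sum_weighted_fibres:
  fixes w :: "'b \<Rightarrow> 'c::comm_semiring_0"
  assumes "finite A" "finite B" "g ` A \<subseteq> B"
  shows "(\<Sum>y\<in>B. w y * (\<Sum>x\<in>{x\<in>A. g x = y}. f x)) = (\<Sum>x\<in>A. w (g x) * f x)"
proof -
  have "(\<Sum>y\<in>B. w y * (\<Sum>x\<in>{x\<in>A. g x = y}. f x)) = (\<Sum>y\<in>B. \<Sum>x\<in>{x\<in>A. g x = y}. w (g x) * f x)"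
    by (simp add: sum_distrib_left)
  also have "\<dots> = (\<Sum>x\<in>A. w (g x) * f x)"
    using assms by (rule sum.group)
  finally show ?thesis .
qed

lemma mult_le_abs_bound:
  fixes w k x :: real
  assumes "0 \<le> w" "w \<le> k"
  shows "w * x \<le> k * \<bar>x\<bar>"
proof -
  have "w * x \<le> w * \<bar>x\<bar>" using assms(1) by (intro mult_left_mono) auto
  also have "\<dots> \<le> k * \<bar>x\<bar>" using assms(2) by (intro mult_right_mono) auto
  finally show ?thesis .
qed

lemma weighted_triple_term_le:
  fixes x y z k a b c :: real
  assumes "1 \<le> x - z" "1 \<le> y - z" "x \<le> k" "y \<le> k" "0 \<le> z" "0 \<le> a" "0 \<le> b" "0 \<le> c"
  shows "x * (- a + c) + y * (- b + c) + z * (a + b - c) \<le> - (a + b) + 2 * k * c"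
proof -
  have "a \<le> (x - z) * a" "b \<le> (y - z) * b"
    using assms mult_right_mono[of 1 _ a] mult_right_mono[of 1 _ b] by auto
  moreover have "(x + y - z) * c \<le> 2 * k * c"
    using assms by (intro mult_right_mono) auto
  ultimately show ?thesis by (simp add: algebra_simps)
qed

lemma compact_PiE_UNIV:
  fixes S :: "'a \<Rightarrow> 'b::topological_space set"
  assumes "\<And>i. compact (S i)"
  shows "compact (PiE UNIV S)"
proof -
  have "compactin (product_topology (\<lambda>i. euclidean) UNIV) (PiE UNIV S)"
    using assms by (simp add: compactin_PiE)
  then show ?thesis by (simp add: euclidean_product_topology)
qed

lemma continuous_attains_sup_above_level:
  fixes f :: "'a::topological_space \<Rightarrow> real"
  assumes "compact K" "closed S" "x0 \<in> S" "continuous_on S f"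
    and "\<And>x. x \<in> S \<Longrightarrow> f x0 \<le> f x \<Longrightarrow> x \<in> K"
  shows "\<exists>x\<in>S. f x0 \<le> f x \<and> (\<forall>y\<in>S. f y \<le> f x)"
proof -
  have "compact (K \<inter> S)" "K \<inter> S \<noteq> {}" "continuous_on (K \<inter> S) f"
    using assms by (auto simp: compact_Int_closed intro: continuous_on_subset)
  then obtain x where x: "x \<in> K \<inter> S" and max: "\<forall>y\<in>K \<inter> S. f y \<le> f x"
    by (meson continuous_attains_sup)
  have level: "f x0 \<le> f x" using max assms(3,5) by auto
  moreover have "f y \<le> f x" if "y \<in> S" for y
  proof (cases "f x0 \<le> f y")
    case True
    then show ?thesis using max assms(5) that by blast
  qed (use level in linarith)
  ultimately show ?thesis using x by blast
qed

lemma NN_subset_Pow: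
  assumes "\<forall>i\<in>{1..m}. Js i \<subseteq> {1..n}"
  shows "NN m Js \<subseteq> Pow {1..n}"
  using assms by (auto simp: NN_def)

lemma finite_NN:
  assumes "\<forall>i\<in>{1..m}. Js i \<subseteq> {1..n}"
  shows "finite (NN m Js)"
  using NN_subset_Pow[OF assms] by (rule finite_subset) simp

lemma card_le_if_mem_NN:
  assumes "\<forall>i\<in>{1..m}. Js i \<subseteq> {1..n}" and "J \<in> NN m Js"
  shows "card J \<le> n"
  using card_mono[of "{1..n}" J] NN_subset_Pow[OF assms(1)] assms(2) by auto

lemma NN_downward_closed: "J \<in> NN m Js \<Longrightarrow> K \<noteq> {} \<Longrightarrow> K \<subseteq> J \<Longrightarrow> K \<in> NN m Js"
  unfolding NN_def by (auto dest: subset_trans)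

lemma triple_mem_NN:
  assumes "t \<in> triples m Js"
  shows "tail1 t \<in> NN m Js" "tail2 t \<in> NN m Js" "head t \<in> NN m Js"
  using assms by (auto simp: triples_def tail1_def tail2_def head_def intro: NN_downward_closed)

lemma card_tail_less_card_head:
  assumes "\<forall>i\<in>{1..m}. Js i \<subseteq> {1..n}" and t: "t \<in> triples m Js"
  shows "card (tail1 t) < card (head t)" "card (tail2 t) < card (head t)"
proof -
  have "finite (head t)"
    using NN_subset_Pow[OF assms(1)] triple_mem_NN(3)[OF t] finite_subset by blast
  moreover have "tail1 t \<subset> head t" "tail2 t \<subset> head t"
    using t unfolding triples_def tail1_def tail2_def head_def by auto blast+
  ultimately show "card (tail1 t) < card (head t)" "card (tail2 t) < card (head t)"
    by (simp_all add: psubset_card_mono)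
qed

lemma finite_triples:
  assumes "\<forall>i\<in>{1..m}. Js i \<subseteq> {1..n}"
  shows "finite (triples m Js)"
proof (rule finite_subset)
  show "triples m Js \<subseteq> NN m Js \<times> NN m Js \<times> NN m Js"
    using triple_mem_NN by (force simp: tail1_def tail2_def head_def)
  show "finite (NN m Js \<times> NN m Js \<times> NN m Js)"
    using finite_NN[OF assms] by simp
qed

lemma sum_neg_part_beta_le:
  assumes "\<forall>i\<in>{1..m}. Js i \<noteq> {} \<and> Js i \<subseteq> {1..n}"
  shows "(\<Sum>J\<in>NN m Js. max 0 (- beta m alpha Js J)) \<le> - (\<Sum>i=1..m. min 0 (alpha i))"
proof -
  have "max 0 (- beta m alpha Js J) \<le> (\<Sum>i\<in>{i\<in>{1..m}. Js i = J}. max 0 (- alpha i))" for J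
  proof -
    have "- beta m alpha Js J \<le> (\<Sum>i\<in>{i\<in>{1..m}. Js i = J}. max 0 (- alpha i))"
      unfolding beta_def sum_negf[symmetric] by (intro sum_mono) simp
    then show ?thesis by (simp add: sum_nonneg)
  qed
  then have "(\<Sum>J\<in>NN m Js. max 0 (- beta m alpha Js J))
      \<le> (\<Sum>J\<in>NN m Js. \<Sum>i\<in>{i\<in>{1..m}. Js i = J}. max 0 (- alpha i))"
    by (rule sum_mono)
  also have "\<dots> = (\<Sum>i=1..m. max 0 (- alpha i))"
    using assms by (intro sum.group finite_NN) (auto simp: NN_def)
  also have "\<dots> = - (\<Sum>i=1..m. min 0 (alpha i))"
    by (simp add: sum_negf[symmetric]) (intro sum.cong; auto)
  finally show ?thesis .
qed

lemma dual_feasible_neg_part_beta: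
  "dual_feasible m alpha Js (\<lambda>_. 0) (\<lambda>_. 0) (\<lambda>_. 0) (\<lambda>J. max 0 (- beta m alpha Js J))"
  by (simp add: dual_feasible_def max_def)

lemma dual_obj_neg_part_beta:
  "dual_obj m Js v (\<lambda>_. 0) (\<lambda>_. 0) (\<lambda>_. 0) (\<lambda>J. max 0 (- beta m alpha Js J))
     = - (\<Sum>J\<in>NN m Js. max 0 (- beta m alpha Js J))"
  by (simp add: dual_obj_def)

lemma sum_l3_mu_le_neg_dual_obj:
  assumes "dual_feasible m alpha Js l1 l2 l3 mu" and "\<And>t. 0 \<le> v t \<and> v t \<le> 1"
  shows "sum l3 (triples m Js) + sum mu (NN m Js) \<le> - dual_obj m Js v l1 l2 l3 mu"
proof -
  have "l3 t \<le> (1 - v t) * (l1 t + l2 t) + (2 - v t) * l3 t" if "t \<in> triples m Js" for t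
  proof -
    have "0 \<le> (1 - v t) * (l1 t + l2 t)" "0 \<le> (1 - v t) * l3 t"
      using assms that by (auto simp: dual_feasible_def)
    then show ?thesis by (simp add: algebra_simps)
  qed
  then have "sum l3 (triples m Js)
      \<le> (\<Sum>t\<in>triples m Js. (1 - v t) * (l1 t + l2 t) + (2 - v t) * l3 t)"
    by (rule sum_mono)
  then show ?thesis by (simp add: dual_obj_def)
qed

lemma dual_obj_nonpos:
  assumes "dual_feasible m alpha Js l1 l2 l3 mu" and "\<And>t. 0 \<le> v t \<and> v t \<le> 1"
  shows "dual_obj m Js v l1 l2 l3 mu \<le> 0"
proof -
  have "0 \<le> sum l3 (triples m Js) + sum mu (NN m Js)"
    using assms(1) by (auto simp: dual_feasible_def intro!: add_nonneg_nonneg sum_nonneg)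
  moreover have "sum l3 (triples m Js) + sum mu (NN m Js) \<le> - dual_obj m Js v l1 l2 l3 mu"
    using assms by (rule sum_l3_mu_le_neg_dual_obj)
  ultimately show ?thesis by linarith
qed

lemma weighted_dual_constraint_sum:
  assumes Js_sub: "\<forall>i\<in>{1..m}. Js i \<subseteq> {1..n}"
    and feas: "dual_feasible m alpha Js l1 l2 l3 mu"
    and w: "\<And>J. J \<in> NN m Js \<Longrightarrow> 0 \<le> w J"
  shows "0 \<le> (\<Sum>J\<in>NN m Js. w J * beta m alpha Js J)
     + (\<Sum>t\<in>triples m Js. w (tail1 t) * (- l1 t + l3 t) + w (tail2 t) * (- l2 t + l3 t)
                           + w (head t) * (l1 t + l2 t - l3 t))
     + (\<Sum>J\<in>NN m Js. w J * mu J)" (is "0 \<le> ?aggregate")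
proof -
  let ?fibre = "\<lambda>g J. {t \<in> triples m Js. g t = J}"
  have "0 \<le> (\<Sum>J\<in>NN m Js. w J * (beta m alpha Js J
        + (\<Sum>t\<in>?fibre tail1 J. - l1 t + l3 t) + (\<Sum>t\<in>?fibre tail2 J. - l2 t + l3 t)
        + (\<Sum>t\<in>?fibre head J. l1 t + l2 t - l3 t) + mu J))"
    using feas w by (intro sum_nonneg mult_nonneg_nonneg) (auto simp: dual_feasible_def)
  also have "\<dots> = ?aggregate"
  proof -
    have "g ` triples m Js \<subseteq> NN m Js" if "g \<in> {tail1, tail2, head}" for g
      using that triple_mem_NN by blast
    then show ?thesis
      by (simp add: distrib_left sum.distrib sum_weighted_fibres finite_NN[OF Js_sub] finite_triples[OF Js_sub])
  qed
  finally show ?thesis .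
qed

lemma sum_l1_l2_le:
  assumes Js_sub: "\<forall>i\<in>{1..m}. Js i \<subseteq> {1..n}"
    and feas: "dual_feasible m alpha Js l1 l2 l3 mu"
  shows "(\<Sum>t\<in>triples m Js. l1 t + l2 t)
    \<le> n * ((\<Sum>J\<in>NN m Js. \<bar>beta m alpha Js J\<bar>) + 2 * sum l3 (triples m Js) + sum mu (NN m Js))"
proof -
  define w :: "nat set \<Rightarrow> real" where "w J = real n - real (card J)" for J
  have w_bounds: "0 \<le> w J \<and> w J \<le> n" if "J \<in> NN m Js" for J
    using card_le_if_mem_NN[OF Js_sub that] by (simp add: w_def)
  have nonneg: "0 \<le> l1 t" "0 \<le> l2 t" "0 \<le> l3 t" if "t \<in> triples m Js" for t
    using feas that by (auto simp: dual_feasible_def)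
  have triple_term: "w (tail1 t) * (- l1 t + l3 t) + w (tail2 t) * (- l2 t + l3 t)
      + w (head t) * (l1 t + l2 t - l3 t) \<le> - (l1 t + l2 t) + 2 * real n * l3 t"
    if t: "t \<in> triples m Js" for t
  proof (rule weighted_triple_term_le)
    show "1 \<le> w (tail1 t) - w (head t)" "1 \<le> w (tail2 t) - w (head t)"
      using card_tail_less_card_head[OF Js_sub t] by (simp_all add: w_def)
    show "w (tail1 t) \<le> n" "w (tail2 t) \<le> n" "0 \<le> w (head t)"
      using w_bounds triple_mem_NN[OF t] by blast+
  qed (use nonneg[OF t] in auto)
  have "0 \<le> (\<Sum>J\<in>NN m Js. w J * beta m alpha Js J)
     + (\<Sum>t\<in>triples m Js. w (tail1 t) * (- l1 t + l3 t) + w (tail2 t) * (- l2 t + l3 t)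
                           + w (head t) * (l1 t + l2 t - l3 t))
     + (\<Sum>J\<in>NN m Js. w J * mu J)"
    using w_bounds by (intro weighted_dual_constraint_sum[OF Js_sub feas]) blast
  moreover have "(\<Sum>J\<in>NN m Js. w J * beta m alpha Js J) \<le> (\<Sum>J\<in>NN m Js. n * \<bar>beta m alpha Js J\<bar>)"
    using w_bounds by (intro sum_mono mult_le_abs_bound) auto
  moreover have "(\<Sum>J\<in>NN m Js. w J * mu J) \<le> (\<Sum>J\<in>NN m Js. n * mu J)"
    using w_bounds feas by (intro sum_mono mult_right_mono) (auto simp: dual_feasible_def)
  moreover have "(\<Sum>t\<in>triples m Js. w (tail1 t) * (- l1 t + l3 t) + w (tail2 t) * (- l2 t + l3 t)
                           + w (head t) * (l1 t + l2 t - l3 t))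
      \<le> (\<Sum>t\<in>triples m Js. - (l1 t + l2 t) + 2 * real n * l3 t)"
    using triple_term by (rule sum_mono)
  moreover have "(\<Sum>t\<in>triples m Js. - (l1 t + l2 t) + 2 * real n * l3 t)
      = 2 * real n * sum l3 (triples m Js) - (\<Sum>t\<in>triples m Js. l1 t + l2 t)"
    by (simp add: sum.distrib sum_subtractf sum_negf sum_distrib_left)
  ultimately show ?thesis
    by (simp add: sum_distrib_left[symmetric] algebra_simps)
qed

lemma sums_dual_vars_le_level:
  assumes Js_sub: "\<forall>i\<in>{1..m}. Js i \<subseteq> {1..n}" and v: "\<And>t. 0 \<le> v t \<and> v t \<le> 1"
    and feas: "dual_feasible m alpha Js l1 l2 l3 mu" and level: "val0 \<le> dual_obj m Js v l1 l2 l3 mu"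
  shows "(\<Sum>t\<in>triples m Js. l1 t + l2 t) \<le> n * ((\<Sum>J\<in>NN m Js. \<bar>beta m alpha Js J\<bar>) + 3 * - val0)"
    and "sum l3 (triples m Js) \<le> - val0" and "sum mu (NN m Js) \<le> - val0"
proof -
  have "sum l3 (triples m Js) + sum mu (NN m Js) \<le> - dual_obj m Js v l1 l2 l3 mu"
    using feas v by (rule sum_l3_mu_le_neg_dual_obj)
  moreover have "0 \<le> sum l3 (triples m Js)" "0 \<le> sum mu (NN m Js)"
    using feas by (simp_all add: dual_feasible_def sum_nonneg)
  ultimately show l3: "sum l3 (triples m Js) \<le> - val0" and mu: "sum mu (NN m Js) \<le> - val0"
    using level by linarith+
  have "(\<Sum>t\<in>triples m Js. l1 t + l2 t)
      \<le> n * ((\<Sum>J\<in>NN m Js. \<bar>beta m alpha Js J\<bar>) + 2 * sum l3 (triples m Js) + sum mu (NN m Js))"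
    using Js_sub feas by (rule sum_l1_l2_le)
  also have "\<dots> \<le> n * ((\<Sum>J\<in>NN m Js. \<bar>beta m alpha Js J\<bar>) + 3 * - val0)"
    using l3 mu by (intro mult_left_mono) auto
  finally show "(\<Sum>t\<in>triples m Js. l1 t + l2 t) \<le> n * ((\<Sum>J\<in>NN m Js. \<bar>beta m alpha Js J\<bar>) + 3 * - val0)" .
qed

lemma dual_feasible_level_bounded:
  assumes Js_sub: "\<forall>i\<in>{1..m}. Js i \<subseteq> {1..n}" and v: "\<And>t. 0 \<le> v t \<and> v t \<le> 1"
  shows "\<exists>M. \<forall>l1 l2 l3 mu. dual_feasible m alpha Js l1 l2 l3 mu \<and> val0 \<le> dual_obj m Js v l1 l2 l3 mu \<longrightarrow>
           (\<forall>t\<in>triples m Js. l1 t \<le> M \<and> l2 t \<le> M \<and> l3 t \<le> M) \<and> (\<forall>J\<in>NN m Js. mu J \<le> M)"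
proof -
  define M where "M = n * ((\<Sum>J\<in>NN m Js. \<bar>beta m alpha Js J\<bar>) + 3 * - val0) - val0"
  have "(\<forall>t\<in>triples m Js. l1 t \<le> M \<and> l2 t \<le> M \<and> l3 t \<le> M) \<and> (\<forall>J\<in>NN m Js. mu J \<le> M)"
    if feas: "dual_feasible m alpha Js l1 l2 l3 mu" and level: "val0 \<le> dual_obj m Js v l1 l2 l3 mu"
    for l1 l2 l3 mu
  proof -
    note sums = sums_dual_vars_le_level[OF Js_sub v feas level]
    have nonneg: "\<forall>t\<in>triples m Js. 0 \<le> l1 t \<and> 0 \<le> l2 t \<and> 0 \<le> l3 t" "\<forall>J\<in>NN m Js. 0 \<le> mu J"
      using feas by (simp_all add: dual_feasible_def)
    then have "0 \<le> - val0"
      using sums(2) sum_nonneg[of "triples m Js" l3] by auto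
    then have "0 \<le> n * ((\<Sum>J\<in>NN m Js. \<bar>beta m alpha Js J\<bar>) + 3 * - val0)"
      by (intro mult_nonneg_nonneg add_nonneg_nonneg sum_nonneg) auto
    moreover have "l1 t + l2 t \<le> (\<Sum>t\<in>triples m Js. l1 t + l2 t)" "l3 t \<le> sum l3 (triples m Js)"
      if "t \<in> triples m Js" for t
      using nonneg that finite_triples[OF Js_sub] by (auto intro!: member_le_sum add_nonneg_nonneg)
    moreover have "mu J \<le> sum mu (NN m Js)" if "J \<in> NN m Js" for J
      using nonneg that finite_NN[OF Js_sub] by (auto intro!: member_le_sum)
    ultimately show ?thesis
      using sums nonneg unfolding M_def by fastforce
  qed
  then show ?thesis by blast
qed

lemma dual_feasible_cong:
  assumes "\<And>t. t \<in> triples m Js \<Longrightarrow> l1 t = l1' t \<and> l2 t = l2' t \<and> l3 t = l3' t"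
    and "\<And>J. J \<in> NN m Js \<Longrightarrow> mu J = mu' J"
  shows "dual_feasible m alpha Js l1 l2 l3 mu = dual_feasible m alpha Js l1' l2' l3' mu'"
proof -
  have "(\<Sum>t\<in>{t\<in>triples m Js. P t}. f (l1 t) (l2 t) (l3 t)) = (\<Sum>t\<in>{t\<in>triples m Js. P t}. f (l1' t) (l2' t) (l3' t))"
    for P and f :: "real \<Rightarrow> real \<Rightarrow> real \<Rightarrow> real"
    using assms(1) by (intro sum.cong) auto
  from this[where f = "\<lambda>x y z. - x + z"] this[where f = "\<lambda>x y z. - y + z"]
    this[where f = "\<lambda>x y z. x + y - z"]
  show ?thesis using assms unfolding dual_feasible_def by auto
qed

lemma dual_obj_cong:
  assumes "\<And>t. t \<in> triples m Js \<Longrightarrow> l1 t = l1' t \<and> l2 t = l2' t \<and> l3 t = l3' t"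
    and "\<And>J. J \<in> NN m Js \<Longrightarrow> mu J = mu' J"
  shows "dual_obj m Js v l1 l2 l3 mu = dual_obj m Js v l1' l2' l3' mu'"
  unfolding dual_obj_def using assms by (simp cong: sum.cong)

type_synonym dual_point = "(triple \<Rightarrow> real) \<times> (triple \<Rightarrow> real) \<times> (triple \<Rightarrow> real) \<times> (nat set \<Rightarrow> real)"

definition dual_obj_at :: "nat \<Rightarrow> (nat \<Rightarrow> nat set) \<Rightarrow> (triple \<Rightarrow> real) \<Rightarrow> dual_point \<Rightarrow> real" where
  "dual_obj_at m Js v p = dual_obj m Js v (fst p) (fst (snd p)) (fst (snd (snd p))) (snd (snd (snd p)))"

definition dual_feasible_points :: "nat \<Rightarrow> (nat \<Rightarrow> real) \<Rightarrow> (nat \<Rightarrow> nat set) \<Rightarrow> dual_point set" where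
  "dual_feasible_points m alpha Js = {p.
     dual_feasible m alpha Js (fst p) (fst (snd p)) (fst (snd (snd p))) (snd (snd (snd p))) \<and>
     (\<forall>t. t \<notin> triples m Js \<longrightarrow> fst p t = 0 \<and> fst (snd p) t = 0 \<and> fst (snd (snd p)) t = 0) \<and>
     (\<forall>J. J \<notin> NN m Js \<longrightarrow> snd (snd (snd p)) J = 0)}"

definition restrict_dual ::
  "nat \<Rightarrow> (nat \<Rightarrow> nat set) \<Rightarrow> (triple \<Rightarrow> real) \<Rightarrow> (triple \<Rightarrow> real) \<Rightarrow> (triple \<Rightarrow> real) \<Rightarrow>
   (nat set \<Rightarrow> real) \<Rightarrow> dual_point" where
  "restrict_dual m Js l1 l2 l3 mu =
     ((\<lambda>t. if t \<in> triples m Js then l1 t else 0), (\<lambda>t. if t \<in> triples m Js then l2 t else 0),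
      (\<lambda>t. if t \<in> triples m Js then l3 t else 0), (\<lambda>J. if J \<in> NN m Js then mu J else 0))"

lemma restrict_dual_mem_dual_feasible_points:
  assumes "dual_feasible m alpha Js l1 l2 l3 mu"
  shows "restrict_dual m Js l1 l2 l3 mu \<in> dual_feasible_points m alpha Js"
  using assms unfolding dual_feasible_points_def restrict_dual_def
  by (simp cong: dual_feasible_cong)

lemma dual_obj_at_restrict_dual:
  "dual_obj_at m Js v (restrict_dual m Js l1 l2 l3 mu) = dual_obj m Js v l1 l2 l3 mu"
  unfolding dual_obj_at_def restrict_dual_def by (simp cong: dual_obj_cong)

lemma closed_dual_feasible_points: "closed (dual_feasible_points m alpha Js)"
  unfolding dual_feasible_points_def dual_feasible_def Ball_def
  by (intro closed_Collect_conj closed_Collect_all closed_Collect_imp open_Collect_const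
      closed_Collect_le closed_Collect_eq continuous_intros continuous_on_product_then_coordinatewise)

lemma continuous_on_dual_obj_at: "continuous_on S (dual_obj_at m Js v)"
  unfolding dual_obj_at_def dual_obj_def
  by (intro continuous_intros continuous_on_product_then_coordinatewise)

lemma dual_feasible_points_level_compact:
  assumes Js_sub: "\<forall>i\<in>{1..m}. Js i \<subseteq> {1..n}" and v: "\<And>t. 0 \<le> v t \<and> v t \<le> 1"
  shows "\<exists>K. compact K \<and> (\<forall>p\<in>dual_feasible_points m alpha Js. val0 \<le> dual_obj_at m Js v p \<longrightarrow> p \<in> K)"
proof -
  have "\<exists>M. \<forall>l1 l2 l3 mu. dual_feasible m alpha Js l1 l2 l3 mu \<and> val0 \<le> dual_obj m Js v l1 l2 l3 mu \<longrightarrow>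
      (\<forall>t\<in>triples m Js. l1 t \<le> M \<and> l2 t \<le> M \<and> l3 t \<le> M) \<and> (\<forall>J\<in>NN m Js. mu J \<le> M)"
    using Js_sub v by (rule dual_feasible_level_bounded)
  then obtain M where M: "\<And>l1 l2 l3 mu. dual_feasible m alpha Js l1 l2 l3 mu \<Longrightarrow>
      val0 \<le> dual_obj m Js v l1 l2 l3 mu \<Longrightarrow>
      (\<forall>t\<in>triples m Js. l1 t \<le> M \<and> l2 t \<le> M \<and> l3 t \<le> M) \<and> (\<forall>J\<in>NN m Js. mu J \<le> M)"
    by blast
  define K where "K = PiE UNIV (\<lambda>t. if t \<in> triples m Js then {0..M} else {0})
      \<times> PiE UNIV (\<lambda>t. if t \<in> triples m Js then {0..M} else {0})
      \<times> PiE UNIV (\<lambda>t. if t \<in> triples m Js then {0..M} else {0})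
      \<times> PiE UNIV (\<lambda>J. if J \<in> NN m Js then {0..M} else {0})"
  have "compact K" unfolding K_def
    by (intro compact_Times compact_PiE_UNIV) auto
  moreover have "p \<in> K" if "p \<in> dual_feasible_points m alpha Js" "val0 \<le> dual_obj_at m Js v p" for p
  proof -
    obtain a b c d where p: "p = (a, b, c, d)" by (cases p)
    have feas: "dual_feasible m alpha Js a b c d"
      and zero: "\<forall>t. t \<notin> triples m Js \<longrightarrow> a t = 0 \<and> b t = 0 \<and> c t = 0" "\<forall>J. J \<notin> NN m Js \<longrightarrow> d J = 0"
      using that(1) by (simp_all add: dual_feasible_points_def p)
    have "(\<forall>t\<in>triples m Js. a t \<le> M \<and> b t \<le> M \<and> c t \<le> M) \<and> (\<forall>J\<in>NN m Js. d J \<le> M)"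
      using M[OF feas] that(2) by (simp add: dual_obj_at_def p)
    moreover have "(\<forall>t\<in>triples m Js. 0 \<le> a t \<and> 0 \<le> b t \<and> 0 \<le> c t) \<and> (\<forall>J\<in>NN m Js. 0 \<le> d J)"
      using feas by (simp add: dual_feasible_def)
    ultimately show ?thesis
      using zero by (auto simp: K_def p PiE_iff)
  qed
  ultimately show ?thesis by blast
qed

lemma dual_opt_value_exists:
  assumes Js_sub: "\<forall>i\<in>{1..m}. Js i \<subseteq> {1..n}" and v: "\<And>t. 0 \<le> v t \<and> v t \<le> 1"
    and feas0: "dual_feasible m alpha Js l1 l2 l3 mu"
  shows "\<exists>val. dual_opt_value m alpha Js v val \<and> dual_obj m Js v l1 l2 l3 mu \<le> val"
proof -
  let ?S = "dual_feasible_points m alpha Js" and ?p0 = "restrict_dual m Js l1 l2 l3 mu"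
  have "\<exists>K. compact K \<and> (\<forall>p\<in>?S. dual_obj_at m Js v ?p0 \<le> dual_obj_at m Js v p \<longrightarrow> p \<in> K)"
    using Js_sub v by (rule dual_feasible_points_level_compact)
  then obtain p where "p \<in> ?S" and above: "dual_obj_at m Js v ?p0 \<le> dual_obj_at m Js v p"
    and max: "\<forall>q\<in>?S. dual_obj_at m Js v q \<le> dual_obj_at m Js v p"
    using continuous_attains_sup_above_level[OF _ closed_dual_feasible_points
        restrict_dual_mem_dual_feasible_points[OF feas0] continuous_on_dual_obj_at]
    by metis
  have "dual_opt_value m alpha Js v (dual_obj_at m Js v p)"
    unfolding dual_opt_value_def
  proof (intro conjI allI impI)
    show "\<exists>l1 l2 l3 mu. dual_feasible m alpha Js l1 l2 l3 mu \<and> dual_obj m Js v l1 l2 l3 mu = dual_obj_at m Js v p"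
      using \<open>p \<in> ?S\<close> by (auto simp: dual_feasible_points_def dual_obj_at_def)
    fix l1' l2' l3' mu' assume "dual_feasible m alpha Js l1' l2' l3' mu'"
    then show "dual_obj m Js v l1' l2' l3' mu' \<le> dual_obj_at m Js v p"
      using max restrict_dual_mem_dual_feasible_points by (metis dual_obj_at_restrict_dual)
  qed
  then show ?thesis using above by (auto simp: dual_obj_at_restrict_dual)
qed

theorem lemma2:
  fixes n m :: nat and alpha :: "nat \<Rightarrow> real" and Js :: "nat \<Rightarrow> nat set" and T :: "triple set"
  assumes "\<forall>i\<in>{1..m}. Js i \<noteq> {} \<and> Js i \<subseteq> {1..n}"
    and "proper_triple_set m Js T"
  defines "eta \<equiv> - (\<Sum>i=1..m. min 0 (alpha i))"
  shows "\<exists>val. dual_opt_value m alpha Js (indicator_vec T) val \<and>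
           - eta \<le> val \<and> val \<le> 0"
proof -
  have Js_sub: "\<forall>i\<in>{1..m}. Js i \<subseteq> {1..n}" using assms(1) by blast
  have v: "\<And>t. 0 \<le> indicator_vec T t \<and> indicator_vec T t \<le> 1"
    by (simp add: indicator_vec_def)
  have "\<exists>val. dual_opt_value m alpha Js (indicator_vec T) val \<and>
      dual_obj m Js (indicator_vec T) (\<lambda>_. 0) (\<lambda>_. 0) (\<lambda>_. 0) (\<lambda>J. max 0 (- beta m alpha Js J)) \<le> val"
    using Js_sub v dual_feasible_neg_part_beta by (rule dual_opt_value_exists)
  then obtain val where opt: "dual_opt_value m alpha Js (indicator_vec T) val"
    and above: "- (\<Sum>J\<in>NN m Js. max 0 (- beta m alpha Js J)) \<le> val"
    by (auto simp: dual_obj_neg_part_beta)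
  have "- eta \<le> val"
    using above sum_neg_part_beta_le[OF assms(1), of alpha] by (simp add: eta_def)
  moreover have "val \<le> 0"
    using opt dual_obj_nonpos[OF _ v] by (auto simp: dual_opt_value_def)
  ultimately show ?thesis using opt by blast
qed

end
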